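(* Every locally Ramsey topological space is $\alpha_{3^-}$, and every $\alpha_{3^-}$ topological space is $\alpha_3$.
   Context: Convention: a "sequence" is a countably infinite set; a countably infinite set $A$ in a space $X$ converges to $x\in X$ if $x\notin A$ and every neighborhood of $x$ contains all but finitely many elements of $A$. $\lim_m x_{nm}=x$ means $x_{nm}\neq x$ for all $m$ and every neighborhood of $x$ contains $x_{nm}$ for all but finitely many $m$. A space $X$ is locally Ramsey if for each $x\in X$, whenever $\lim_m x_{nm}=x$ for all $n$, there is an infinite $I\subseteq\mathbb N$ such that $\{x_{nm}: n,m\in I,\ n<m\}$ converges to $x$. $X$ is $\alpha_{3^-}$ if for each $x\in X$, whenever $\lim_m x_{nm}=x$ for all $n$, there are infinite $I,J\subseteq\mathbb N$ such that $\{x_{nm}: n\in I,\ m\in J,\ n<m\}$ converges to $x$. $X$ is $\alpha_3$ if for each $x\in X$ and all pairwise disjoint sequences $S_1,S_2,\dots\subseteq X$ each converging to $x$, there is a sequence $S\subseteq\bigcup_nS_n$ converging to $x$ such that $S_n\cap S$ is infinite for infinitely many $n$. *)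

theory Defs
  imports "HOL-Analysis.Analysis"
begin

definition set_converges :: "'a topology \<Rightarrow> 'a set \<Rightarrow> 'a \<Rightarrow> bool" where
  "set_converges X A x \<longleftrightarrow>
     A \<subseteq> topspace X \<and> countable A \<and> infinite A \<and> x \<in> topspace X \<and> x \<notin> A \<and>
     (\<forall>U. openin X U \<and> x \<in> U \<longrightarrow> finite (A - U))"

definition seq_lim :: "'a topology \<Rightarrow> (nat \<Rightarrow> 'a) \<Rightarrow> 'a \<Rightarrow> bool" where
  "seq_lim X s x \<longleftrightarrow>
     (\<forall>m. s m \<noteq> x) \<and>
     (\<forall>U. openin X U \<and> x \<in> U \<longrightarrow> finite {m. s m \<notin> U})"

definition locally_ramsey :: "'a topology \<Rightarrow> bool" where
  "locally_ramsey X \<longleftrightarrow>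
     (\<forall>x \<in> topspace X. \<forall>s :: nat \<Rightarrow> nat \<Rightarrow> 'a.
        (\<forall>n m. s n m \<in> topspace X) \<and> (\<forall>n. seq_lim X (s n) x) \<longrightarrow>
        (\<exists>I. infinite I \<and>
             set_converges X {s n m | n m. n \<in> I \<and> m \<in> I \<and> n < m} x))"

definition alpha3_minus :: "'a topology \<Rightarrow> bool" where
  "alpha3_minus X \<longleftrightarrow>
     (\<forall>x \<in> topspace X. \<forall>s :: nat \<Rightarrow> nat \<Rightarrow> 'a.
        (\<forall>n m. s n m \<in> topspace X) \<and> (\<forall>n. seq_lim X (s n) x) \<longrightarrow>
        (\<exists>I J. infinite I \<and> infinite J \<and>
             set_converges X {s n m | n m. n \<in> I \<and> m \<in> J \<and> n < m} x))"

definition alpha3 :: "'a topology \<Rightarrow> bool" where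
  "alpha3 X \<longleftrightarrow>
     (\<forall>x \<in> topspace X. \<forall>S :: nat \<Rightarrow> 'a set.
        (\<forall>n m. n \<noteq> m \<longrightarrow> S n \<inter> S m = {}) \<and> (\<forall>n. set_converges X (S n) x) \<longrightarrow>
        (\<exists>T. T \<subseteq> (\<Union>n. S n) \<and> set_converges X T x \<and>
             infinite {n. infinite (S n \<inter> T)}))"

end

theory Submission
  imports Defs
begin

text \<open>For the second implication, enumerate each
  convergent set S n injectively as a sequence s n; the convergent set of all s n m with
  n \<in> I, m \<in> J, n < m then meets S n, for every n \<in> I, in the infinitely many points
  s n m with m \<in> J, m > n.\<close>

lemma set_converges_enumeration:
  assumes "set_converges X A x"
  obtains s where "bij_betw s UNIV A" "seq_lim X s x"
proof
  let ?s = "from_nat_into A"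
  show bij: "bij_betw ?s UNIV A"
    using assms bij_betw_from_nat_into unfolding set_converges_def by blast
  show "seq_lim X ?s x"
    unfolding seq_lim_def
  proof (intro conjI allI impI)
    fix m
    show "?s m \<noteq> x"
      using assms bij_betwE[OF bij] unfolding set_converges_def by blast
  next
    fix U assume "openin X U \<and> x \<in> U"
    then have "finite (A - U)"
      using assms unfolding set_converges_def by blast
    moreover have "{m. ?s m \<notin> U} = ?s -` (A - U)"
      using bij_betwE[OF bij] by auto
    ultimately show "finite {m. ?s m \<notin> U}"
      using bij by (simp add: bij_betw_def finite_vimageI)
  qed
qed

lemma locally_ramsey_imp_alpha3_minus:
  assumes "locally_ramsey X"
  shows "alpha3_minus X"
  unfolding alpha3_minus_def
proof (intro ballI allI impI)
  fix x and s :: "nat \<Rightarrow> nat \<Rightarrow> 'a"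
  assume "x \<in> topspace X" "(\<forall>n m. s n m \<in> topspace X) \<and> (\<forall>n. seq_lim X (s n) x)"
  then obtain I where "infinite I" "set_converges X {s n m | n m. n \<in> I \<and> m \<in> I \<and> n < m} x"
    using assms unfolding locally_ramsey_def by blast
  then show "\<exists>I J. infinite I \<and> infinite J \<and>
      set_converges X {s n m | n m. n \<in> I \<and> m \<in> J \<and> n < m} x"
    by blast
qed

lemma infinite_row_above:
  fixes J :: "nat set"
  assumes "inj f" "infinite J"
  shows "infinite {f m | m. m \<in> J \<and> n < m}"
proof -
  have "infinite (J - {..n})"
    using Diff_infinite_finite[OF finite_atMost assms(2)] .
  then have "infinite (f ` (J - {..n}))"
    using assms(1) by (simp add: finite_image_iff inj_on_subset)
  moreover have "f ` (J - {..n}) = {f m | m. m \<in> J \<and> n < m}"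
    by auto
  ultimately show ?thesis
    by simp
qed

lemma alpha3_minus_imp_alpha3:
  assumes "alpha3_minus X"
  shows "alpha3 X"
  unfolding alpha3_def
proof (intro ballI allI impI, elim conjE)
  fix x and S :: "nat \<Rightarrow> 'a set"
  assume x: "x \<in> topspace X" and conv: "\<forall>n. set_converges X (S n) x"
  have "\<exists>f. bij_betw f UNIV (S n) \<and> seq_lim X f x" for n
    using set_converges_enumeration[OF conv[rule_format, of n]] by blast
  then obtain s where "\<forall>n. bij_betw (s n) UNIV (S n) \<and> seq_lim X (s n) x"
    by (metis choice)
  then have bij: "\<And>n. bij_betw (s n) UNIV (S n)" and lim: "\<And>n. seq_lim X (s n) x"
    by auto
  have s_in: "s n m \<in> S n" for n m
    using bij_betwE[OF bij] by blast
  have "\<forall>n m. s n m \<in> topspace X"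
    using s_in conv unfolding set_converges_def by blast
  then obtain I J :: "nat set" where "infinite I" "infinite J"
    and "set_converges X {s n m | n m. n \<in> I \<and> m \<in> J \<and> n < m} x"
    using assms x lim unfolding alpha3_minus_def by blast
  moreover define T where "T = {s n m | n m. n \<in> I \<and> m \<in> J \<and> n < m}"
  ultimately have T_conv: "set_converges X T x"
    by simp
  have "I \<subseteq> {n. infinite (S n \<inter> T)}"
  proof
    fix n assume "n \<in> I"
    then have "{s n m | m. m \<in> J \<and> n < m} \<subseteq> S n \<inter> T"
      unfolding T_def using s_in by auto
    moreover have "infinite {s n m | m. m \<in> J \<and> n < m}"
      using infinite_row_above[OF bij_betw_imp_inj_on[OF bij] \<open>infinite J\<close>] .
    ultimately show "n \<in> {n. infinite (S n \<inter> T)}"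
      using infinite_super by blast
  qed
  then have "infinite {n. infinite (S n \<inter> T)}"
    using \<open>infinite I\<close> infinite_super by blast
  moreover have "T \<subseteq> (\<Union>n. S n)"
    unfolding T_def using s_in by auto
  ultimately show "\<exists>T. T \<subseteq> (\<Union>n. S n) \<and> set_converges X T x \<and> infinite {n. infinite (S n \<inter> T)}"
    using T_conv by blast
qed

theorem corollary2p7:
  fixes X :: "'a topology"
  shows "(locally_ramsey X \<longrightarrow> alpha3_minus X) \<and> (alpha3_minus X \<longrightarrow> alpha3 X)"
  using locally_ramsey_imp_alpha3_minus alpha3_minus_imp_alpha3 by blast

end
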